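(* Let $N=(V,A)$ be a tree-based network and let $A'\subseteq A$. Then $A'$ is the set of arcs of a support tree for $N$ if and only if $A'$ is the union of the set of arboreal arcs of $N$ and (the arcs of $N$ corresponding to the edges of) a supporting set for $\mathcal{J}_N$.
   Context: A phylogenetic network on a nonempty finite set $X$ is a rooted acyclic digraph with no parallel arcs such that: the unique root has out-degree at least one; $X$ is exactly the set of vertices of out-degree zero (leaves), each of in-degree one; every other vertex either has in-degree one and out-degree at least two (a tree vertex) or in-degree at least two and out-degree one (a reticulation). If $|X|=1$, the network may also consist of the single vertex in $X$. An omnian is a non-leaf vertex all of whose children are reticulations. $N$ is tree-based if it has a spanning tree rooted at the root of $N$ all of whose leaves lie in $X$; a support tree for $N$ is such a spanning tree, i.e., a subgraph of $N$ with vertex set $V$ that is a directed tree rooted at the root of $N$ whose leaf set is exactly $X$ (equivalently, a subdivision of a phylogenetic $X$-tree embedded in $N$ using all vertices of $N$). Let $R_t$ be the set of reticulations of $N$ with no reticulation parent, and $Q_t$ the set of vertices of $N$ having a child in $R_t$. $\mathcal{J}_N$ is the bipartite graph with vertex bipartition $\{Q_t,R_t\}$ and an edge $\{q,r\}$ for each arc $(q,r)\in A$ with $q\in Q_t$, $r\in R_t$; each edge is identified with the corresponding arc of $N$. A supporting set for $\mathcal{J}_N$ is a set $E$ of edges of $\mathcal{J}_N$ such that each omnian in $Q_t$ is incident with at least one edge of $E$ and each vertex of $R_t$ is incident with exactly one edge of $E$. An arc $(u,v)$ of $N$ is arboreal if $u$ is a reticulation, or $v$ is a tree vertex or a leaf.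 *)

theory Defs
  imports Main
begin

text \<open>A directed graph is given by a vertex set V and an arc set A of ordered pairs
(so there are no parallel arcs).\<close>

definition parents :: "('a \<times> 'a) set \<Rightarrow> 'a \<Rightarrow> 'a set" where
  "parents A v = {u. (u, v) \<in> A}"

definition children :: "('a \<times> 'a) set \<Rightarrow> 'a \<Rightarrow> 'a set" where
  "children A v = {w. (v, w) \<in> A}"

definition indeg :: "('a \<times> 'a) set \<Rightarrow> 'a \<Rightarrow> nat" where
  "indeg A v = card (parents A v)"

definition outdeg :: "('a \<times> 'a) set \<Rightarrow> 'a \<Rightarrow> nat" where
  "outdeg A v = card (children A v)"

definition is_root :: "'a set \<Rightarrow> ('a \<times> 'a) set \<Rightarrow> 'a \<Rightarrow> bool" where
  "is_root V A r \<longleftrightarrow> r \<in> V \<and> indeg A r = 0 \<and>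
     (\<forall>v\<in>V. indeg A v = 0 \<longrightarrow> v = r) \<and> (\<forall>v\<in>V. (r, v) \<in> A\<^sup>*)"

definition phylo_network :: "'a set \<Rightarrow> ('a \<times> 'a) set \<Rightarrow> 'a set \<Rightarrow> bool" where
  "phylo_network V A X \<longleftrightarrow>
     finite V \<and> A \<subseteq> V \<times> V \<and> X \<noteq> {} \<and>
     ((card X = 1 \<and> V = X \<and> A = {}) \<or>
      (acyclic A \<and>
       (\<exists>r. is_root V A r \<and> outdeg A r \<ge> 1) \<and>
       X = {v \<in> V. outdeg A v = 0} \<and>
       (\<forall>x\<in>X. indeg A x = 1) \<and>
       (\<forall>v\<in>V - X. indeg A v \<noteq> 0 \<longrightarrow>
          (indeg A v = 1 \<and> outdeg A v \<ge> 2) \<or> (indeg A v \<ge> 2 \<and> outdeg A v = 1))))"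

definition reticulation :: "'a set \<Rightarrow> ('a \<times> 'a) set \<Rightarrow> 'a \<Rightarrow> bool" where
  "reticulation V A v \<longleftrightarrow> v \<in> V \<and> indeg A v \<ge> 2 \<and> outdeg A v = 1"

definition tree_vertex :: "'a set \<Rightarrow> ('a \<times> 'a) set \<Rightarrow> 'a \<Rightarrow> bool" where
  "tree_vertex V A v \<longleftrightarrow> v \<in> V \<and> indeg A v = 1 \<and> outdeg A v \<ge> 2"

definition omnian :: "'a set \<Rightarrow> ('a \<times> 'a) set \<Rightarrow> 'a set \<Rightarrow> 'a \<Rightarrow> bool" where
  "omnian V A X v \<longleftrightarrow> v \<in> V \<and> v \<notin> X \<and> (\<forall>w \<in> children A v. reticulation V A w)"

definition support_tree :: "'a set \<Rightarrow> ('a \<times> 'a) set \<Rightarrow> 'a set \<Rightarrow> ('a \<times> 'a) set \<Rightarrow> bool" where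
  "support_tree V A X A' \<longleftrightarrow> A' \<subseteq> A \<and>
     (\<exists>r. is_root V A r \<and> is_root V A' r \<and> (\<forall>v\<in>V - {r}. indeg A' v = 1)) \<and>
     {v \<in> V. outdeg A' v = 0} = X"

definition tree_based :: "'a set \<Rightarrow> ('a \<times> 'a) set \<Rightarrow> 'a set \<Rightarrow> bool" where
  "tree_based V A X \<longleftrightarrow> (\<exists>A'. support_tree V A X A')"

definition R_t :: "'a set \<Rightarrow> ('a \<times> 'a) set \<Rightarrow> 'a set" where
  "R_t V A = {r. reticulation V A r \<and> (\<forall>p \<in> parents A r. \<not> reticulation V A p)}"

definition Q_t :: "'a set \<Rightarrow> ('a \<times> 'a) set \<Rightarrow> 'a set" where
  "Q_t V A = {q \<in> V. \<exists>r \<in> R_t V A. (q, r) \<in> A}"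

text \<open>Edges of the bipartite graph J_N, identified with the corresponding arcs of N.\<close>
definition J_edges :: "'a set \<Rightarrow> ('a \<times> 'a) set \<Rightarrow> ('a \<times> 'a) set" where
  "J_edges V A = {(q, r) \<in> A. q \<in> Q_t V A \<and> r \<in> R_t V A}"

definition supporting_set :: "'a set \<Rightarrow> ('a \<times> 'a) set \<Rightarrow> 'a set \<Rightarrow> ('a \<times> 'a) set \<Rightarrow> bool" where
  "supporting_set V A X E \<longleftrightarrow> E \<subseteq> J_edges V A \<and>
     (\<forall>q \<in> Q_t V A. omnian V A X q \<longrightarrow> (\<exists>r. (q, r) \<in> E)) \<and>
     (\<forall>r \<in> R_t V A. \<exists>!q. (q, r) \<in> E)"

definition arboreal_arcs :: "'a set \<Rightarrow> ('a \<times> 'a) set \<Rightarrow> 'a set \<Rightarrow> ('a \<times> 'a) set" where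
  "arboreal_arcs V A X = {(u, v) \<in> A. reticulation V A u \<or> tree_vertex V A v \<or> v \<in> X}"

end

theory Submission
  imports Defs
begin

text \<open>An arc (u,v) fails to be arboreal exactly when u is not a reticulation and v is one.
A support tree must contain every arboreal arc: a leaf or tree vertex has only one parent to
choose, and a reticulation has only one child. The remaining arcs of a support tree each enter
a reticulation whose parents are all non-reticulations, i.e. a vertex of R_t, and every vertex of
R_t receives exactly one of them; a non-leaf vertex whose outgoing arcs are all non-arboreal is an
omnian, so it needs one of these arcs to avoid becoming a leaf. Conversely, adding such a choice to
the arboreal arcs gives every non-root vertex exactly one parent and creates no new leaves; that
the omnians in question lie in Q_t is where tree-basedness is used. Acyclicity then makes the
resulting subgraph a tree rooted at the root of N.\<close>

lemma finite_parents: "finite B \<Longrightarrow> finite (parents B v)"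
  unfolding parents_def by (rule finite_subset[of _ "fst ` B"]) force+

lemma finite_children: "finite B \<Longrightarrow> finite (children B v)"
  unfolding children_def by (rule finite_subset[of _ "snd ` B"]) force+

lemma indeg_eq_0_iff: "finite B \<Longrightarrow> indeg B v = 0 \<longleftrightarrow> (\<forall>u. (u, v) \<notin> B)"
  using finite_parents[of B v] unfolding indeg_def by (auto simp: parents_def)

lemma outdeg_eq_0_iff: "finite B \<Longrightarrow> outdeg B v = 0 \<longleftrightarrow> (\<forall>w. (v, w) \<notin> B)"
  using finite_children[of B v] unfolding outdeg_def by (auto simp: children_def)

lemma card_Collect_eq_1_iff: "card {x. P x} = 1 \<longleftrightarrow> (\<exists>!x. P x)"
  by (auto simp: card_1_singleton_iff) (metis mem_Collect_eq singleton_iff)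

lemma indeg_eq_1_iff: "indeg B v = 1 \<longleftrightarrow> (\<exists>!u. (u, v) \<in> B)"
  unfolding indeg_def parents_def by (rule card_Collect_eq_1_iff)

lemma outdeg_eq_1_iff: "outdeg B v = 1 \<longleftrightarrow> (\<exists>!w. (v, w) \<in> B)"
  unfolding outdeg_def children_def by (rule card_Collect_eq_1_iff)

lemma reticulation_unique_child:
  "reticulation V A v \<Longrightarrow> (v, w) \<in> A \<Longrightarrow> (v, w') \<in> A \<Longrightarrow> w = w'"
  unfolding reticulation_def outdeg_eq_1_iff by blast

lemma tree_vertex_unique_parent:
  "tree_vertex V A v \<Longrightarrow> (u, v) \<in> A \<Longrightarrow> (u', v) \<in> A \<Longrightarrow> u = u'"
  unfolding tree_vertex_def indeg_eq_1_iff by blast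

lemma reticulation_not_tree_vertex: "reticulation V A v \<Longrightarrow> \<not> tree_vertex V A v"
  unfolding reticulation_def tree_vertex_def by auto

lemma reticulation_has_parent: "reticulation V A v \<Longrightarrow> \<exists>u. (u, v) \<in> A"
  unfolding reticulation_def indeg_def parents_def
  by (metis Collect_empty_eq card.empty not_numeral_le_zero)

lemma mem_arboreal_arcs_iff:
  "(u, v) \<in> arboreal_arcs V A X \<longleftrightarrow>
     (u, v) \<in> A \<and> (reticulation V A u \<or> tree_vertex V A v \<or> v \<in> X)"
  by (simp add: arboreal_arcs_def)

lemma is_root_no_parent: "finite A \<Longrightarrow> is_root V A r \<Longrightarrow> (u, r) \<notin> A"
  unfolding is_root_def by (simp add: indeg_eq_0_iff)

lemma acyclic_reachable_from_root:
  assumes "finite S" and "acyclic S" and "S \<subseteq> V \<times> V"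
    and parent: "\<And>v. v \<in> V - {r} \<Longrightarrow> \<exists>u. (u, v) \<in> S"
    and "v \<in> V"
  shows "(r, v) \<in> S\<^sup>*"
  using \<open>v \<in> V\<close>
proof (induction v rule: wf_induct_rule[OF finite_acyclic_wf[OF assms(1,2)]])
  case (1 v)
  show ?case
  proof (cases "v = r")
    case False
    then obtain u where "(u, v) \<in> S" using parent 1(2) by blast
    moreover from this have "(r, u) \<in> S\<^sup>*" using 1 \<open>S \<subseteq> V \<times> V\<close> by blast
    ultimately show ?thesis by (simp add: rtrancl_into_rtrancl)
  qed simp
qed

locale phylogenetic_network =
  fixes V :: "'a set" and A :: "('a \<times> 'a) set" and X :: "'a set"
  assumes network: "phylo_network V A X"
begin

lemma arcs_subset: "A \<subseteq> V \<times> V"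
  using network unfolding phylo_network_def by blast

lemma finite_arcs: "finite A"
  using network arcs_subset unfolding phylo_network_def by (meson finite_SigmaI finite_subset)

lemma acyclic_arcs: "acyclic A"
  using network unfolding phylo_network_def by (auto simp: acyclic_def)

lemma leaves_eq: "X = {v \<in> V. outdeg A v = 0}"
  using network outdeg_eq_0_iff[OF finite_arcs] unfolding phylo_network_def by auto

lemma leaf_iff: "v \<in> X \<longleftrightarrow> v \<in> V \<and> (\<forall>w. (v, w) \<notin> A)"
  by (subst leaves_eq) (simp add: outdeg_eq_0_iff[OF finite_arcs])

lemma leaf_unique_parent:
  assumes "(u, v) \<in> A" and "(u', v) \<in> A" and "v \<in> X"
  shows "u = u'"
proof -
  have "A \<noteq> {}" using assms by blast
  then have "indeg A v = 1" using network assms(3) unfolding phylo_network_def by blast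
  with assms(1,2) show ?thesis unfolding indeg_eq_1_iff by blast
qed

lemma arc_head_cases:
  assumes "(u, v) \<in> A"
  shows "v \<in> X \<or> tree_vertex V A v \<or> reticulation V A v"
proof (cases "v \<in> X")
  case False
  have "v \<in> V" and "indeg A v \<noteq> 0"
    using assms arcs_subset indeg_eq_0_iff[OF finite_arcs] by auto
  with False have "indeg A v = 1 \<and> outdeg A v \<ge> 2 \<or> indeg A v \<ge> 2 \<and> outdeg A v = 1"
    using network unfolding phylo_network_def by blast
  then show ?thesis using \<open>v \<in> V\<close> unfolding tree_vertex_def reticulation_def by blast
qed simp

lemma reticulation_not_leaf: "reticulation V A v \<Longrightarrow> v \<notin> X"
  unfolding reticulation_def by (subst leaves_eq) simp

lemma not_arboreal_iff:
  assumes "(u, v) \<in> A"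
  shows "(u, v) \<notin> arboreal_arcs V A X \<longleftrightarrow> \<not> reticulation V A u \<and> reticulation V A v"
  using assms arc_head_cases[OF assms] reticulation_not_tree_vertex[of V A v]
    reticulation_not_leaf[of v]
  by (auto simp: mem_arboreal_arcs_iff)

lemma J_edges_iff: "(q, r) \<in> J_edges V A \<longleftrightarrow> (q, r) \<in> A \<and> r \<in> R_t V A"
  using arcs_subset unfolding J_edges_def Q_t_def by blast

lemma supporting_set_arc:
  "supporting_set V A X E \<Longrightarrow> (u, v) \<in> E \<Longrightarrow> (u, v) \<in> A \<and> v \<in> R_t V A"
  unfolding supporting_set_def using J_edges_iff by blast

lemma not_arboreal_into_R_t:
  assumes "r \<in> R_t V A"
  shows "(u, r) \<notin> arboreal_arcs V A X"
proof
  assume arc: "(u, r) \<in> arboreal_arcs V A X"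
  then have "(u, r) \<in> A" unfolding mem_arboreal_arcs_iff by blast
  with assms have "\<not> reticulation V A u" and "reticulation V A r"
    unfolding R_t_def parents_def by blast+
  with arc \<open>(u, r) \<in> A\<close> show False using not_arboreal_iff by blast
qed

lemma arboreal_parent_exists:
  assumes "(u, v) \<in> A" and "v \<notin> R_t V A"
  obtains p where "(p, v) \<in> arboreal_arcs V A X"
proof (cases "reticulation V A v")
  case True
  then obtain p where "(p, v) \<in> A" and "reticulation V A p"
    using assms(2) unfolding R_t_def parents_def by blast
  then show ?thesis using that unfolding mem_arboreal_arcs_iff by blast
next
  case False
  then show ?thesis using that assms(1) arc_head_cases unfolding mem_arboreal_arcs_iff by blast
qed

lemma omnian_if_no_arboreal_child:
  assumes "v \<in> V" and "v \<notin> X" and no_child: "\<And>w. (v, w) \<notin> arboreal_arcs V A X"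
  shows "omnian V A X v" and "\<not> reticulation V A v"
proof -
  obtain w where "(v, w) \<in> A" using assms(1,2) leaf_iff by blast
  then show "\<not> reticulation V A v"
    using no_child unfolding mem_arboreal_arcs_iff by blast
  then show "omnian V A X v"
    using assms no_child not_arboreal_iff unfolding omnian_def children_def by blast
qed

lemma support_treeI:
  assumes "S \<subseteq> A" and root: "is_root V A r"
    and parent: "\<And>v. v \<in> V - {r} \<Longrightarrow> \<exists>!u. (u, v) \<in> S"
    and leaves: "{v \<in> V. outdeg S v = 0} = X"
  shows "support_tree V A X S"
proof -
  have "finite S" using assms(1) finite_arcs finite_subset by blast
  have "acyclic S" using assms(1) acyclic_subset[OF acyclic_arcs] by blast
  have "S \<subseteq> V \<times> V" using assms(1) arcs_subset by blast
  have indeg: "\<forall>v\<in>V - {r}. indeg S v = 1" unfolding indeg_eq_1_iff using parent by auto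
  have "r \<in> V" using root unfolding is_root_def by blast
  moreover have "indeg S r = 0"
    using assms(1) is_root_no_parent[OF finite_arcs root] indeg_eq_0_iff[OF \<open>finite S\<close>] by blast
  moreover have "v = r" if "v \<in> V" and "indeg S v = 0" for v
    using that indeg by (metis DiffI singletonD zero_neq_one)
  moreover have "(r, v) \<in> S\<^sup>*" if "v \<in> V" for v
    by (rule acyclic_reachable_from_root[OF \<open>finite S\<close> \<open>acyclic S\<close> \<open>S \<subseteq> V \<times> V\<close> _ that])
      (use parent in blast)
  ultimately have "is_root V S r" unfolding is_root_def by blast
  with assms(1) root indeg leaves show ?thesis unfolding support_tree_def by blast
qed

end

locale support_tree_of_network = phylogenetic_network +
  fixes S :: "('a \<times> 'a) set"
  assumes support_tree: "support_tree V A X S"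
begin

lemma support_subset: "S \<subseteq> A"
  using support_tree unfolding support_tree_def by blast

lemma support_unique_parent:
  assumes "(u, v) \<in> S" and "(u', v) \<in> S"
  shows "u = u'"
proof -
  obtain r where r: "is_root V A r" and indeg: "\<forall>v\<in>V - {r}. indeg S v = 1"
    using support_tree unfolding support_tree_def by blast
  have "v \<in> V" "v \<noteq> r"
    using assms(1) support_subset arcs_subset is_root_no_parent[OF finite_arcs r] by blast+
  then have "indeg S v = 1" using indeg by blast
  with assms show ?thesis unfolding indeg_eq_1_iff by blast
qed

lemma support_has_parent:
  assumes "(u, v) \<in> A"
  obtains p where "(p, v) \<in> S"
proof -
  obtain r where r: "is_root V A r" and indeg: "\<forall>v\<in>V - {r}. indeg S v = 1"
    using support_tree unfolding support_tree_def by blast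
  have "v \<in> V" "v \<noteq> r"
    using assms arcs_subset is_root_no_parent[OF finite_arcs r] by blast+
  then have "indeg S v = 1" using indeg by blast
  then show ?thesis using that by (metis indeg_eq_1_iff)
qed

lemma support_has_child:
  assumes "v \<in> V" and "v \<notin> X"
  obtains w where "(v, w) \<in> S"
proof -
  have "finite S" using support_subset finite_arcs finite_subset by blast
  have "{v \<in> V. outdeg S v = 0} = X"
    using support_tree unfolding support_tree_def by blast
  with assms have "outdeg S v \<noteq> 0" by (metis (mono_tags, lifting) mem_Collect_eq)
  then obtain w where "(v, w) \<in> S" using outdeg_eq_0_iff[OF \<open>finite S\<close>, of v] by auto
  then show ?thesis by (rule that)
qed

lemma arboreal_subset_support: "arboreal_arcs V A X \<subseteq> S"
proof (rule subrelI)
  fix u v assume arb: "(u, v) \<in> arboreal_arcs V A X"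
  then have uv: "(u, v) \<in> A" unfolding mem_arboreal_arcs_iff by blast
  show "(u, v) \<in> S"
  proof (cases "reticulation V A u")
    case True
    have "u \<in> V" using uv arcs_subset by blast
    then obtain w where "(u, w) \<in> S"
      using reticulation_not_leaf[OF True] by (rule support_has_child)
    moreover have "(u, w) \<in> A" using calculation support_subset by blast
    ultimately show ?thesis
      using uv reticulation_unique_child[OF True] by blast
  next
    case False
    then have "tree_vertex V A v \<or> v \<in> X" using arb unfolding mem_arboreal_arcs_iff by blast
    then have unique: "p = u" if "(p, v) \<in> A" for p
      using that uv leaf_unique_parent tree_vertex_unique_parent by metis
    obtain p where "(p, v) \<in> S" using uv by (rule support_has_parent)
    then show ?thesis using unique support_subset by blast
  qed
qed

lemma support_arc_into_R_t:
  assumes "(u, v) \<in> S" and "(u, v) \<notin> arboreal_arcs V A X"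
  shows "v \<in> R_t V A"
proof -
  have uv: "(u, v) \<in> A" using assms(1) support_subset by blast
  have "\<not> reticulation V A p" if "(p, v) \<in> A" for p
  proof
    assume "reticulation V A p"
    with that have "(p, v) \<in> arboreal_arcs V A X" unfolding mem_arboreal_arcs_iff by blast
    then have "(p, v) \<in> S" using arboreal_subset_support by blast
    then have "p = u" using assms(1) support_unique_parent by blast
    with \<open>reticulation V A p\<close> assms(2) uv show False using not_arboreal_iff by blast
  qed
  then show ?thesis using assms(2) uv not_arboreal_iff unfolding R_t_def parents_def by blast
qed

text \<open>A reticulation parent of the child chosen below v would give a second, arboreal,
support-tree arc into that child.\<close>

lemma omnian_in_Q_t:
  assumes "omnian V A X v" and "\<not> reticulation V A v"
  shows "v \<in> Q_t V A"
proof -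
  have "v \<in> V" and "v \<notin> X" using assms(1) unfolding omnian_def by blast+
  then obtain w where vw: "(v, w) \<in> S" by (rule support_has_child)
  then have "(v, w) \<in> A" using support_subset by blast
  then have "reticulation V A w" using assms(1) unfolding omnian_def children_def by blast
  with \<open>(v, w) \<in> A\<close> assms(2) have "(v, w) \<notin> arboreal_arcs V A X"
    using not_arboreal_iff by blast
  then have "w \<in> R_t V A" using vw support_arc_into_R_t by blast
  then show ?thesis using \<open>(v, w) \<in> A\<close> arcs_subset unfolding Q_t_def by blast
qed

lemma supporting_set_diff_arboreal: "supporting_set V A X (S - arboreal_arcs V A X)"
  unfolding supporting_set_def
proof (intro conjI ballI impI)
  show "S - arboreal_arcs V A X \<subseteq> J_edges V A"
  proof (rule subrelI)
    fix u v assume "(u, v) \<in> S - arboreal_arcs V A X"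
    then show "(u, v) \<in> J_edges V A"
      using support_subset support_arc_into_R_t unfolding J_edges_iff by blast
  qed
next
  fix q assume omnian: "omnian V A X q" and "q \<in> Q_t V A"
  then obtain r where "r \<in> R_t V A" and "(q, r) \<in> A" unfolding Q_t_def by blast
  then have "\<not> reticulation V A q" unfolding R_t_def parents_def by blast
  have "q \<in> V" and "q \<notin> X" using omnian unfolding omnian_def by blast+
  then obtain w where w: "(q, w) \<in> S" by (rule support_has_child)
  then have "(q, w) \<in> A" using support_subset by blast
  moreover from this have "reticulation V A w"
    using omnian unfolding omnian_def children_def by blast
  ultimately have "(q, w) \<notin> arboreal_arcs V A X"
    using \<open>\<not> reticulation V A q\<close> not_arboreal_iff by blast
  with w show "\<exists>w. (q, w) \<in> S - arboreal_arcs V A X" by blast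
next
  fix r assume r: "r \<in> R_t V A"
  then have "reticulation V A r" unfolding R_t_def by simp
  then obtain u0 where "(u0, r) \<in> A" by (blast dest: reticulation_has_parent)
  then obtain u where u: "(u, r) \<in> S" by (rule support_has_parent)
  show "\<exists>!q. (q, r) \<in> S - arboreal_arcs V A X"
  proof (rule ex1I[of _ u])
    show "(u, r) \<in> S - arboreal_arcs V A X" using u not_arboreal_into_R_t[OF r] by blast
  qed (use u support_unique_parent in blast)
qed

lemma supporting_union_unique_parent:
  assumes E: "supporting_set V A X E" and "(u0, v) \<in> A"
  shows "\<exists>!u. (u, v) \<in> arboreal_arcs V A X \<union> E"
proof (cases "v \<in> R_t V A")
  case True
  from E have "\<forall>r\<in>R_t V A. \<exists>!q. (q, r) \<in> E" unfolding supporting_set_def by (elim conjE)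
  then have "\<exists>!q. (q, v) \<in> E" using True by (rule bspec)
  then show ?thesis using not_arboreal_into_R_t[OF True] by simp
next
  case False
  with assms(2) obtain p where "(p, v) \<in> arboreal_arcs V A X" by (rule arboreal_parent_exists)
  moreover have "(u, v) \<notin> E" for u using E False supporting_set_arc by blast
  ultimately show ?thesis
    using arboreal_subset_support support_unique_parent by (intro ex1I[of _ p]) blast+
qed

lemma supporting_union_leaves:
  assumes E: "supporting_set V A X E"
  shows "{v \<in> V. outdeg (arboreal_arcs V A X \<union> E) v = 0} = X"
proof -
  let ?B = "arboreal_arcs V A X"
  have "?B \<union> E \<subseteq> A" using E supporting_set_arc unfolding arboreal_arcs_def by auto
  then have "finite (?B \<union> E)" using finite_arcs finite_subset by blast
  moreover have "v \<in> X \<longleftrightarrow> v \<in> V \<and> (\<forall>w. (v, w) \<notin> ?B \<union> E)" for v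
  proof
    assume "v \<in> X"
    then show "v \<in> V \<and> (\<forall>w. (v, w) \<notin> ?B \<union> E)"
      using leaf_iff \<open>?B \<union> E \<subseteq> A\<close> by blast
  next
    assume v: "v \<in> V \<and> (\<forall>w. (v, w) \<notin> ?B \<union> E)"
    show "v \<in> X"
    proof (rule ccontr)
      assume "v \<notin> X"
      with v have "omnian V A X v" and "\<not> reticulation V A v"
        using omnian_if_no_arboreal_child by blast+
      then have "v \<in> Q_t V A" by (rule omnian_in_Q_t)
      moreover from E have "\<forall>q\<in>Q_t V A. omnian V A X q \<longrightarrow> (\<exists>w. (q, w) \<in> E)"
        unfolding supporting_set_def by (elim conjE)
      ultimately obtain w where "(v, w) \<in> E" using \<open>omnian V A X v\<close> by blast
      with v show False by blast
    qed
  qed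
  ultimately show ?thesis by (auto simp: outdeg_eq_0_iff)
qed

end

context phylogenetic_network
begin

lemma support_tree_arboreal_union:
  assumes "support_tree V A X T" and E: "supporting_set V A X E"
  shows "support_tree V A X (arboreal_arcs V A X \<union> E)"
proof -
  interpret T: support_tree_of_network V A X T
    by unfold_locales (rule assms(1))
  obtain r where root: "is_root V A r" using assms(1) unfolding support_tree_def by blast
  have "arboreal_arcs V A X \<union> E \<subseteq> A"
    using E supporting_set_arc unfolding arboreal_arcs_def by auto
  moreover have "\<exists>!u. (u, v) \<in> arboreal_arcs V A X \<union> E" if v: "v \<in> V - {r}" for v
  proof -
    obtain u0 where "(u0, v) \<in> A"
      using v root indeg_eq_0_iff[OF finite_arcs] unfolding is_root_def by blast
    with E show ?thesis by (rule T.supporting_union_unique_parent)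
  qed
  ultimately show ?thesis using T.supporting_union_leaves[OF E] by (rule support_treeI[OF _ root])
qed

end

theorem theorem7:
  fixes V :: "'a set" and A A' :: "('a \<times> 'a) set" and X :: "'a set"
  assumes "phylo_network V A X"
    and "tree_based V A X"
    and "A' \<subseteq> A"
  shows "support_tree V A X A' \<longleftrightarrow>
           (\<exists>E. supporting_set V A X E \<and> A' = arboreal_arcs V A X \<union> E)"
proof -
  interpret phylogenetic_network V A X by unfold_locales (rule assms(1))
  show ?thesis
  proof
    assume "support_tree V A X A'"
    then interpret support_tree_of_network V A X A' by unfold_locales
    have "A' = arboreal_arcs V A X \<union> (A' - arboreal_arcs V A X)"
      using arboreal_subset_support by blast
    then show "\<exists>E. supporting_set V A X E \<and> A' = arboreal_arcs V A X \<union> E"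
      using supporting_set_diff_arboreal by blast
  next
    assume "\<exists>E. supporting_set V A X E \<and> A' = arboreal_arcs V A X \<union> E"
    then obtain E where "supporting_set V A X E" and "A' = arboreal_arcs V A X \<union> E" by blast
    moreover obtain T where "support_tree V A X T"
      using assms(2) unfolding tree_based_def by blast
    ultimately show "support_tree V A X A'" using support_tree_arboreal_union by blast
  qed
qed

end
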